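(* Let $\beta=0$, $R\ge0$, $D>0$, and let $\alpha_\infty^D$ be the maximum value of $\alpha_0$ over all numerical walls for the Chern character $(-R,0,D,0)$ on $\mathbb{P}^3$. Then $D-2<\alpha_\infty^D\le D$.
   Context: On $\mathbb{P}^3$ with hyperplane class $H$, Chern characters are the vectors of coefficients of $1,H,H^2,H^3$. For the Chern character $v=(-R,0,D,0)$ and the Bayer–Macrì–Toda stability conditions $\sigma_{0,\alpha,s}$ ($\alpha,s>0$; central charge $Z=-(\operatorname{ch}_3-(s+\frac16)\alpha^2\operatorname{ch}_1)+\sqrt{-1}(\operatorname{ch}_2-\frac{\alpha^2}{2}\operatorname{ch}_0)$), a numerical wall is a curve $(s+\frac16)\alpha^2=\alpha_0^2/6$ with $\alpha_0^2=6e/c$, where $(r,c,d,e)=\operatorname{ch}(A)$ for some $A\in D^b(\mathbb{P}^3)$ with $c>0$ satisfying $0<d<D$, $0<c(6e)\le\min\{4d^2,4(D-d)^2\}$, and $-\frac{c(2D-2d)}{6e}-R\le r\le\frac{2cd}{6e}$. (Being the Chern character of an object forces in particular $r,c\in\mathbb{Z}$, $d-\frac{c^2}{2}\in\mathbb{Z}$, $2e-cd+\frac{c^3}{6}\in\mathbb{Z}$, $e-\frac c6\in\mathbb{Z}$.) *)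

theory Defs
  imports Complex_Main
begin

text \<open>Chern characters on P^3 are vectors (ch0,ch1,ch2,ch3) of coefficients of 1,H,H^2,H^3.
  ch(O(k)) = (1, k, k^2/2, k^3/6).  The numerical Chern characters of objects of D^b(P^3)
  are exactly the integer combinations of ch(O), ch(O(1)), ch(O(2)), ch(O(3))
  (the line bundles O(k), k=0..3, generate K_0(P^3)).\<close>

definition ch_line_bundle :: "int \<Rightarrow> real \<times> real \<times> real \<times> real" where
  "ch_line_bundle k = (1, real_of_int k, (real_of_int k)^2 / 2, (real_of_int k)^3 / 6)"

definition is_chern_character :: "real \<times> real \<times> real \<times> real \<Rightarrow> bool" where
  "is_chern_character v \<longleftrightarrow>
     (\<exists>a :: int \<Rightarrow> int.
        v = ((\<Sum>k\<in>{0..3}. of_int (a k) * fst (ch_line_bundle k)),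
             (\<Sum>k\<in>{0..3}. of_int (a k) * fst (snd (ch_line_bundle k))),
             (\<Sum>k\<in>{0..3}. of_int (a k) * fst (snd (snd (ch_line_bundle k)))),
             (\<Sum>k\<in>{0..3}. of_int (a k) * snd (snd (snd (ch_line_bundle k))))))"

text \<open>A tuple (r,c,d,e) = ch(A) defines a numerical wall for v = (-R,0,D,0)
  (with respect to sigma_{0,alpha,s}).\<close>

definition numerical_wall :: "real \<Rightarrow> real \<Rightarrow> real \<times> real \<times> real \<times> real \<Rightarrow> bool" where
  "numerical_wall R D w \<longleftrightarrow>
     (case w of (r, c, d, e) \<Rightarrow>
        is_chern_character (r, c, d, e) \<and> c > 0 \<and>
        0 < d \<and> d < D \<and>
        0 < c * (6 * e) \<and> c * (6 * e) \<le> min (4 * d^2) (4 * (D - d)^2) \<and>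
        - (c * (2 * D - 2 * d)) / (6 * e) - R \<le> r \<and> r \<le> (2 * c * d) / (6 * e))"

definition wall_alpha0 :: "real \<times> real \<times> real \<times> real \<Rightarrow> real" where
  "wall_alpha0 w = (case w of (r, c, d, e) \<Rightarrow> sqrt (6 * e / c))"

definition wall_alpha0_values :: "real \<Rightarrow> real \<Rightarrow> real set" where
  "wall_alpha0_values R D = wall_alpha0 ` {w. numerical_wall R D w}"

end

(* On a wall ch_1 = c and 6 ch_3 = 6e are positive integers with c * 6e <= min (4d^2, 4(D - d)^2) <= D^2,
   so alpha_0^2 = 6e / c takes finitely many values, each at most 6e <= D^2.  Conversely, for
   D in {2k + 1, 2k + 2} the half-integral character (0, 1, k + 1/2, (6m + 1)/6) is a wall as soon as
   6m + 1 <= (2k + 1)^2; odd squares are 1 or 3 mod 6, so m can be chosen with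
   6m + 1 >= (2k + 1)^2 - 2 > (D - 2)^2, and then alpha_0 = sqrt (6m + 1) > D - 2. *)

theory Submission
  imports Defs
begin

lemma is_chern_character_integrality:
  assumes "is_chern_character (r, c, d, e)"
  shows "c \<in> \<int>" and "6 * e \<in> \<int>"
proof -
  obtain a :: "int \<Rightarrow> int" where
    "c = (\<Sum>k\<in>{0..3}. of_int (a k) * fst (snd (ch_line_bundle k)))"
    "e = (\<Sum>k\<in>{0..3}. of_int (a k) * snd (snd (snd (ch_line_bundle k))))"
    using assms unfolding is_chern_character_def by auto
  moreover have "{0..3::int} = {0, 1, 2, 3}" by auto
  ultimately have "c = of_int (a 1 + 2 * a 2 + 3 * a 3)"
    and "6 * e = of_int (a 1 + 8 * a 2 + 27 * a 3)"
    by (simp_all add: ch_line_bundle_def)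
  then show "c \<in> \<int>" and "6 * e \<in> \<int>" by simp_all
qed

lemma is_chern_character_half_integral:
  fixes k m :: int
  shows "is_chern_character (0, 1, of_int k + 1/2, (6 * of_int m + 1) / 6)"
proof -
  have "{0..3::int} = {0, 1, 2, 3}" by auto
  then show ?thesis
    unfolding is_chern_character_def
    by (intro exI[of _ "\<lambda>i. if i = 0 then 2*k - m - 1 else if i = 1 then 3*m - 5*k + 1
                          else if i = 2 then 4*k - 3*m else m - k"])
       (simp add: ch_line_bundle_def field_simps)
qed

lemma min_four_squares_le:
  fixes d D :: real
  assumes "0 \<le> d" and "d \<le> D"
  shows "min (4 * d\<^sup>2) (4 * (D - d)\<^sup>2) \<le> D\<^sup>2"
proof (cases "d \<le> D / 2")
  case True
  then have "d\<^sup>2 \<le> (D / 2)\<^sup>2" using assms by (intro power_mono) auto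
  then show ?thesis by (simp add: power_divide)
next
  case False
  then have "(D - d)\<^sup>2 \<le> (D / 2)\<^sup>2" using assms by (intro power_mono) auto
  then show ?thesis by (simp add: power_divide)
qed

lemma numerical_wall_integral_bounds:
  assumes "numerical_wall R D (r, c, d, e)"
  obtains ci ni :: int where "c = of_int ci" and "6 * e = of_int ni"
    and "1 \<le> ci" and "1 \<le> ni" and "of_int ci * of_int ni \<le> D\<^sup>2"
proof -
  have wall: "is_chern_character (r, c, d, e)" "0 < c" "0 < d" "d < D" "0 < c * (6 * e)"
    "c * (6 * e) \<le> min (4 * d\<^sup>2) (4 * (D - d)\<^sup>2)"
    using assms unfolding numerical_wall_def by auto
  obtain ci ni :: int where ci: "c = of_int ci" and ni: "6 * e = of_int ni"
    using is_chern_character_integrality[OF wall(1)] by (auto elim!: Ints_cases)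
  have "0 < ni" using wall(2,5) ci ni by (simp add: zero_less_mult_iff)
  moreover have "c * (6 * e) \<le> D\<^sup>2"
    using wall(6) min_four_squares_le[of d D] wall(3,4) by linarith
  ultimately show ?thesis using that ci ni wall(2) by simp
qed

lemma wall_alpha0_le:
  assumes "numerical_wall R D w"
  shows "wall_alpha0 w \<le> D"
proof -
  obtain r c d e where w: "w = (r, c, d, e)" by (cases w)
  obtain ci ni :: int where ci: "c = of_int ci" and ni: "6 * e = of_int ni"
    and "1 \<le> ci" "1 \<le> ni" and prod: "of_int ci * of_int ni \<le> D\<^sup>2"
    using numerical_wall_integral_bounds assms unfolding w by blast
  then have "6 * e / c \<le> of_int ni" and "of_int ni \<le> of_int ci * (of_int ni :: real)"
    by (simp_all add: divide_le_eq)
  with prod have "6 * e / c \<le> D\<^sup>2" by linarith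
  moreover have "0 < D" using assms unfolding w numerical_wall_def by auto
  ultimately show ?thesis
    unfolding w wall_alpha0_def using real_sqrt_le_mono[of "6 * e / c" "D\<^sup>2"] by simp
qed

lemma wall_alpha0_values_subset:
  "wall_alpha0_values R D \<subseteq>
     (\<lambda>(c, n). sqrt (of_int n / of_int c)) ` ({1..\<lceil>D\<^sup>2\<rceil>} \<times> {1..\<lceil>D\<^sup>2\<rceil>})"
proof
  fix x assume "x \<in> wall_alpha0_values R D"
  then obtain r c d e where wall: "numerical_wall R D (r, c, d, e)"
    and x: "x = wall_alpha0 (r, c, d, e)"
    unfolding wall_alpha0_values_def by auto
  obtain ci ni :: int where "c = of_int ci" "6 * e = of_int ni" "1 \<le> ci" "1 \<le> ni"
    and prod: "of_int ci * of_int ni \<le> D\<^sup>2"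
    using numerical_wall_integral_bounds[OF wall] by blast
  moreover have "of_int ci \<le> D\<^sup>2" and "of_int ni \<le> D\<^sup>2"
    using \<open>1 \<le> ci\<close> \<open>1 \<le> ni\<close> order_trans[OF _ prod] by simp_all
  ultimately show "x \<in> (\<lambda>(c, n). sqrt (of_int n / of_int c)) ` ({1..\<lceil>D\<^sup>2\<rceil>} \<times> {1..\<lceil>D\<^sup>2\<rceil>})"
    unfolding x wall_alpha0_def
    by (intro image_eqI[of _ _ "(ci, ni)"]) (auto simp: le_ceiling_iff)
qed

lemma finite_wall_alpha0_values: "finite (wall_alpha0_values R D)"
  by (rule finite_subset[OF wall_alpha0_values_subset]) simp

lemma odd_square_mod_6:
  fixes n :: int
  assumes "odd n"
  shows "n\<^sup>2 mod 6 = 1 \<or> n\<^sup>2 mod 6 = 3"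
proof -
  have "n mod 6 = 1 \<or> n mod 6 = 3 \<or> n mod 6 = 5" using assms by presburger
  moreover have "n\<^sup>2 mod 6 = (n mod 6)\<^sup>2 mod 6" by (simp add: power_mod)
  ultimately show ?thesis by auto
qed

lemma odd_square_near_1_mod_6:
  fixes n :: int
  assumes "odd n"
  obtains m where "0 \<le> m" and "n\<^sup>2 - 2 \<le> 6 * m + 1" and "6 * m + 1 \<le> n\<^sup>2"
proof
  let ?m = "(n\<^sup>2 - 1) div 6"
  have "n \<noteq> 0" using assms by auto
  then have "1 \<le> n\<^sup>2" by (simp add: int_one_le_iff_zero_less)
  then show "0 \<le> ?m" by simp
  show "n\<^sup>2 - 2 \<le> 6 * ?m + 1" "6 * ?m + 1 \<le> n\<^sup>2"
    using odd_square_mod_6[OF assms] by presburger+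
qed

lemma numerical_wall_half_integral:
  fixes k m :: int and R D :: real
  assumes "0 \<le> R" and "0 \<le> k" and "2 * k + 1 \<le> D" and "0 \<le> m"
    and "6 * m + 1 \<le> (2 * k + 1)\<^sup>2"
  shows "numerical_wall R D (0, 1, of_int k + 1/2, (6 * of_int m + 1) / 6)"
proof -
  define d :: real where "d = of_int k + 1/2"
  define e :: real where "e = (6 * of_int m + 1) / 6"
  have e: "6 * e = of_int (6 * m + 1)" and "0 < 6 * e"
    using \<open>0 \<le> m\<close> unfolding e_def by simp_all
  have "0 < d" and "d \<le> D - d" using assms(2,3) unfolding d_def by simp_all
  have four_d: "4 * d\<^sup>2 = of_int ((2 * k + 1)\<^sup>2)"
    unfolding d_def by (simp add: power2_eq_square algebra_simps)
  have "6 * e \<le> 4 * d\<^sup>2"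
    unfolding e four_d of_int_le_iff by (rule assms(5))
  moreover have "4 * d\<^sup>2 \<le> 4 * (D - d)\<^sup>2"
    using power_mono[OF \<open>d \<le> D - d\<close>, of 2] \<open>0 < d\<close> by simp
  ultimately have product_bound: "1 * (6 * e) \<le> min (4 * d\<^sup>2) (4 * (D - d)\<^sup>2)"
    by simp
  have "0 \<le> (2 * D - 2 * d) / (6 * e)"
    using \<open>0 < d\<close> \<open>d \<le> D - d\<close> \<open>0 < 6 * e\<close> by (intro divide_nonneg_pos) linarith+
  then have lower: "- (1 * (2 * D - 2 * d)) / (6 * e) - R \<le> 0"
    using \<open>0 \<le> R\<close> unfolding minus_divide_left[symmetric] by linarith
  have upper: "0 \<le> 2 * 1 * d / (6 * e)" using \<open>0 < d\<close> \<open>0 < 6 * e\<close> by simp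
  have "is_chern_character (0, 1, d, e)"
    unfolding d_def e_def by (rule is_chern_character_half_integral)
  then have "numerical_wall R D (0, 1, d, e)"
    unfolding numerical_wall_def prod.case
    using \<open>0 < d\<close> \<open>d \<le> D - d\<close> \<open>0 < 6 * e\<close> product_bound lower upper
    by (intro conjI) (assumption | linarith)+
  then show ?thesis unfolding d_def e_def .
qed

lemma exists_numerical_wall_alpha0_gt:
  fixes R D :: int
  assumes "0 \<le> R" and "0 < D"
  obtains w where "numerical_wall R D w" and "of_int D - 2 < wall_alpha0 w"
proof -
  define k where "k = (D - 1) div 2"
  have "0 \<le> k" and D: "D = 2 * k + 1 \<or> D = 2 * k + 2"
    using \<open>0 < D\<close> unfolding k_def by auto
  obtain m where "0 \<le> m" and m: "(2 * k + 1)\<^sup>2 - 2 \<le> 6 * m + 1" "6 * m + 1 \<le> (2 * k + 1)\<^sup>2"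
    using odd_square_near_1_mod_6[of "2 * k + 1"] by auto
  let ?w = "(0, 1, of_int k + 1/2, (6 * of_int m + 1) / 6) :: real \<times> real \<times> real \<times> real"
  have "numerical_wall R D ?w"
    using numerical_wall_half_integral[of R k D m] assms(1) \<open>0 \<le> k\<close> D \<open>0 \<le> m\<close> m(2) by auto
  moreover have alpha0: "wall_alpha0 ?w = sqrt (of_int (6 * m + 1))"
    unfolding wall_alpha0_def by simp
  have "of_int D - 2 < wall_alpha0 ?w"
  proof (cases "D \<le> 2")
    case True
    have "0 < sqrt (of_int (6 * m + 1))" using \<open>0 \<le> m\<close> by simp
    then show ?thesis using alpha0 True by linarith
  next
    case False
    then have "(D - 2)\<^sup>2 < 6 * m + 1"
      using D m(1) by (auto simp: power2_eq_square algebra_simps)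
    then have "(of_int D - 2)\<^sup>2 < (of_int (6 * m + 1) :: real)"
      by (metis of_int_less_iff of_int_numeral of_int_diff of_int_power)
    then have "sqrt ((of_int D - 2)\<^sup>2) < sqrt (of_int (6 * m + 1))"
      by (rule real_sqrt_less_mono)
    then show ?thesis using alpha0 False by simp
  qed
  ultimately show ?thesis using that by blast
qed

theorem proposition4p1:
  fixes R D :: int
  assumes "R \<ge> 0" and "D > 0"
  shows "finite (wall_alpha0_values (real_of_int R) (real_of_int D))
       \<and> wall_alpha0_values (real_of_int R) (real_of_int D) \<noteq> {}
       \<and> real_of_int D - 2 < Max (wall_alpha0_values (real_of_int R) (real_of_int D))
       \<and> Max (wall_alpha0_values (real_of_int R) (real_of_int D)) \<le> real_of_int D"
proof -
  let ?S = "wall_alpha0_values (real_of_int R) (real_of_int D)"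
  have fin: "finite ?S" by (rule finite_wall_alpha0_values)
  obtain w where "numerical_wall R D w" and "of_int D - 2 < wall_alpha0 w"
    using exists_numerical_wall_alpha0_gt assms by blast
  then have "wall_alpha0 w \<in> ?S" and "of_int D - 2 < Max ?S"
    using Max_ge[OF fin] unfolding wall_alpha0_values_def by (auto intro: less_le_trans)
  moreover have "Max ?S \<le> of_int D"
  proof (subst Max_le_iff[OF fin])
    show "?S \<noteq> {}" using \<open>wall_alpha0 w \<in> ?S\<close> by blast
    show "\<forall>x\<in>?S. x \<le> of_int D"
      unfolding wall_alpha0_values_def using wall_alpha0_le by blast
  qed
  ultimately show ?thesis using fin by blast
qed

end
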